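(* Let $\Lambda$ be a smooth section of $\wedge^3(D^* )$, viewed as a 3-form on $Q$ that vanishes upon contraction with vectors in $W$, and let $\Xi$ be the 2-form on $D^*$ obtained by contracting $\tau_{D^*}^*\Lambda$ with any second order vector field on $D^*$; locally $\Xi=\tfrac12 B^\gamma_{\alpha\beta}\pi_\gamma\,\mu^\alpha\wedge\mu^\beta$ where $B_{\alpha\beta\gamma}=\Lambda(X_\alpha,X_\beta,X_\gamma)$ and $B^\gamma_{\alpha\beta}=\mathcal G^{\gamma\delta}B_{\alpha\beta\delta}$ (here $\mu^\alpha$ denotes the pull-back $\tau_{D^*}^*\mu^\alpha$). Then the bundle map $$\mathrm{Id}_{TD^*}+\Pi_{nh}^\sharp\circ\Xi^\flat : TD^*\to TD^*$$ is an invertible endomorphism of $TD^*$.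
   Context: $Q$ is a smooth $n$-manifold with a Riemannian metric $\langle\cdot,\cdot\rangle$ and a smooth function $V$; $D\subset TQ$ is a distribution of constant rank $r<n$. A subbundle $W\subset TQ$ with $TQ=D\oplus W$ is fixed, and $D^*$ is identified with the annihilator $W^\circ\subset T^*Q$; $\tau_{D^*}:D^*\to Q$ is the projection. Indices: $\alpha,\beta,\gamma,\delta\in\{1,\dots,r\}$, $A\in\{r+1,\dots,n\}$, $i,j,k\in\{1,\dots,n\}$, with summation convention. Locally, $X_1,\dots,X_r$ is a basis of sections of $D$ and $X_{r+1},\dots,X_n$ a basis of sections of the metric orthogonal complement $D^\perp$; write $X_j=\rho^i_j\partial_{q^i}$ in coordinates $q^i$ on $Q$ and $[X_i,X_j]=C^k_{ij}X_k$. Put $\mathcal G_{\alpha\beta}=\langle X_\alpha,X_\beta\rangle$ with inverse matrix $\mathcal G^{\alpha\beta}$. Let $\mu^1,\dots,\mu^r$ be the local 1-forms on $Q$ vanishing on $W$ with $\mu^\alpha(X_\beta)=\delta^\alpha_\beta$; the element $\pi_\alpha\mu^\alpha(q)$ of $D^*$ has coordinates $(q^i,\pi_\alpha)$. The nonholonomic bivector on $D^*$ is $\Pi_{nh}=\rho^i_\alpha\partial_{q^i}\wedge\partial_{\pi_\alpha}-\tfrac12C^\gamma_{\alpha\beta}\pi_\gamma\,\partial_{\pi_\alpha}\wedge\partial_{\pi_\beta}$, i.e. $\{q^i,q^j\}=0$, $\{q^i,\pi_\alpha\}=\rho^i_\alpha$, $\{\pi_\alpha,\pi_\beta\}=-C^\gamma_{\alpha\beta}\pi_\gamma$.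 For a bivector $\Pi$, $\Pi^\sharp:T^*D^*\to TD^*$ is defined by $\eta(\Pi^\sharp(\xi))=\Pi(\eta,\xi)$; for a 2-form $\Xi$, $\Xi^\flat(v)=\Xi(v,\cdot)$. A vector field $Z$ on $D^*$ is second order if $T\tau_{D^*}(Z(q,\pi))=\mathcal G^{\alpha\beta}\pi_\beta X_\alpha(q)$ for all $(q,\pi)$. *)

theory Defs
  imports "HOL-Analysis.Analysis"
begin

text \<open>Coordinates q on an open set U of real^'q (n = CARD('q)).
  Indices alpha,beta,... range over the finite type 'd (r = CARD('d)),
  indices A over 'c (n - r = CARD('c)), frame indices j over 'd + 'c
  (Inl alpha = X_alpha spanning D, Inr A = X_A spanning the metric complement).
  A point of D* over the chart is (q, pi) with pi :: real^'d, and tangent vectors /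
  covectors of D* at (q,pi) are pairs (real^'q) x (real^'d) in the coordinates
  (q^i, pi_alpha); covector eta acts on vector v by  fst eta . fst v + snd eta . snd v.\<close>

fun dderiv :: "'a::real_normed_vector list \<Rightarrow> ('a \<Rightarrow> real) \<Rightarrow> 'a \<Rightarrow> real" where
  "dderiv [] f = f"
| "dderiv (v # vs) f = (\<lambda>x. frechet_derivative (dderiv vs f) (at x) v)"

definition smooth_on :: "'a::real_normed_vector set \<Rightarrow> ('a \<Rightarrow> real) \<Rightarrow> bool" where
  "smooth_on U f \<longleftrightarrow> (\<forall>vs. continuous_on U (dderiv vs f) \<and>
                         (\<forall>x\<in>U. dderiv vs f differentiable (at x)))"

definition smooth_vf_on :: "(real^'n) set \<Rightarrow> (real^'n \<Rightarrow> real^'m) \<Rightarrow> bool" where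
  "smooth_vf_on U F \<longleftrightarrow> (\<forall>i. smooth_on U (\<lambda>x. F x $ i))"

definition lie_bracket :: "(real^'n \<Rightarrow> real^'n) \<Rightarrow> (real^'n \<Rightarrow> real^'n) \<Rightarrow> real^'n \<Rightarrow> real^'n" where
  "lie_bracket F G x = frechet_derivative G (at x) (F x) - frechet_derivative F (at x) (G x)"

definition trilinear :: "('a::real_vector \<Rightarrow> 'a \<Rightarrow> 'a \<Rightarrow> real) \<Rightarrow> bool" where
  "trilinear L \<longleftrightarrow> (\<forall>v w. linear (\<lambda>u. L u v w)) \<and> (\<forall>u w. linear (\<lambda>v. L u v w))
                  \<and> (\<forall>u v. linear (\<lambda>w. L u v w))"

definition alternating3 :: "('a \<Rightarrow> 'a \<Rightarrow> 'a \<Rightarrow> real) \<Rightarrow> bool" where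
  "alternating3 L \<longleftrightarrow> (\<forall>u v w. L v u w = - L u v w \<and> L u w v = - L u v w)"

definition pair_cv :: "((real^'q) \<times> (real^'d)) \<Rightarrow> ((real^'q) \<times> (real^'d)) \<Rightarrow> real" where
  "pair_cv eta v = fst eta \<bullet> fst v + snd eta \<bullet> snd v"

text \<open>Nonholonomic bivector at (q,pi):
  Pi_nh = rho^i_alpha d_{q^i} /\ d_{pi_alpha} - 1/2 C^gamma_{alpha beta} pi_gamma d_{pi_alpha} /\ d_{pi_beta},
  with (u /\ v)(eta,xi) = eta(u) xi(v) - eta(v) xi(u) and rho^i_alpha = X_alpha^i.\<close>
definition Pi_nh ::
  "('d + 'c \<Rightarrow> real^'q \<Rightarrow> real^'q) \<Rightarrow> ('d + 'c \<Rightarrow> 'd + 'c \<Rightarrow> 'd + 'c \<Rightarrow> real^'q \<Rightarrow> real)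
   \<Rightarrow> real^'q \<Rightarrow> real^'d \<Rightarrow> ((real^'q) \<times> (real^'d)) \<Rightarrow> ((real^'q) \<times> (real^'d)) \<Rightarrow> real" where
  "Pi_nh X C q p eta xi =
     (\<Sum>i\<in>UNIV. \<Sum>a\<in>UNIV. (X (Inl a) q $ i) *
         (fst eta $ i * snd xi $ a - snd eta $ a * fst xi $ i))
   - (1/2) * (\<Sum>a\<in>UNIV. \<Sum>b\<in>UNIV. \<Sum>c\<in>UNIV. C (Inl c) (Inl a) (Inl b) q * p $ c *
         (snd eta $ a * snd xi $ b - snd eta $ b * snd xi $ a))"

definition bv_sharp :: "(((real^'q) \<times> (real^'d)) \<Rightarrow> ((real^'q) \<times> (real^'d)) \<Rightarrow> real)
    \<Rightarrow> ((real^'q) \<times> (real^'d)) \<Rightarrow> ((real^'q) \<times> (real^'d))" where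
  "bv_sharp P xi = ((\<chi> i. P (axis i 1, 0) xi), (\<chi> a. P (0, axis a 1) xi))"

definition form_flat :: "(((real^'q) \<times> (real^'d)) \<Rightarrow> ((real^'q) \<times> (real^'d)) \<Rightarrow> real)
    \<Rightarrow> ((real^'q) \<times> (real^'d)) \<Rightarrow> ((real^'q) \<times> (real^'d))" where
  "form_flat Xi v = ((\<chi> i. Xi v (axis i 1, 0)), (\<chi> a. Xi v (0, axis a 1)))"

definition Gmat :: "(real^'q \<Rightarrow> real^'q \<Rightarrow> real^'q \<Rightarrow> real) \<Rightarrow> ('d + 'c \<Rightarrow> real^'q \<Rightarrow> real^'q)
    \<Rightarrow> real^'q \<Rightarrow> real^'d^'d" where
  "Gmat g X q = (\<chi> a b. g q (X (Inl a) q) (X (Inl b) q))"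

definition Bup :: "(real^'q::finite \<Rightarrow> real^'q \<Rightarrow> real^'q \<Rightarrow> real^'q \<Rightarrow> real)
    \<Rightarrow> (real^'q \<Rightarrow> real^'q \<Rightarrow> real^'q \<Rightarrow> real) \<Rightarrow> ('d + 'c \<Rightarrow> real^'q \<Rightarrow> real^'q)
    \<Rightarrow> real^'q \<Rightarrow> 'd::finite \<Rightarrow> 'd \<Rightarrow> 'd \<Rightarrow> real" where
  "Bup Lam g X q c a b =
     (\<Sum>d\<in>UNIV. matrix_inv (Gmat g X q) $ c $ d * Lam q (X (Inl a) q) (X (Inl b) q) (X (Inl d) q))"

text \<open>Xi = 1/2 B^gamma_{alpha beta} pi_gamma mu^alpha /\ mu^beta, mu^alpha pulled back by tau
  (so mu^alpha(v) only sees the base component fst v).\<close>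
definition Xi_form :: "(real^'q \<Rightarrow> real^'q \<Rightarrow> real^'q \<Rightarrow> real^'q \<Rightarrow> real)
    \<Rightarrow> (real^'q \<Rightarrow> real^'q \<Rightarrow> real^'q \<Rightarrow> real) \<Rightarrow> ('d + 'c \<Rightarrow> real^'q \<Rightarrow> real^'q)
    \<Rightarrow> ('d \<Rightarrow> real^'q \<Rightarrow> real^'q) \<Rightarrow> real^'q \<Rightarrow> real^'d
    \<Rightarrow> ((real^'q) \<times> (real^'d)) \<Rightarrow> ((real^'q) \<times> (real^'d)) \<Rightarrow> real" where
  "Xi_form Lam g X mu q p v w =
     (1/2) * (\<Sum>a\<in>UNIV. \<Sum>b\<in>UNIV. \<Sum>c\<in>UNIV. Bup Lam g X q c a b * p $ c *
        ((mu a q \<bullet> fst v) * (mu b q \<bullet> fst w) - (mu b q \<bullet> fst v) * (mu a q \<bullet> fst w)))"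

end

theory Submission
  imports Defs
begin

text \<open>\<open>\<Xi>\<close> is pulled back from \<open>Q\<close>, so \<open>\<Xi>\<^sup>\<flat>\<close> kills vertical vectors and takes values in
  horizontal covectors, while \<open>\<Pi>\<^sub>n\<^sub>h\<^sup>\<sharp>\<close> maps horizontal covectors to vertical vectors. Hence
  \<open>K = \<Pi>\<^sub>n\<^sub>h\<^sup>\<sharp> \<circ> \<Xi>\<^sup>\<flat>\<close> satisfies \<open>K \<circ> K = 0\<close>, and \<open>Id + K\<close> is invertible with inverse \<open>Id - K\<close>.
  This uses only the coordinate shape of \<open>\<Xi>\<close> and \<open>\<Pi>\<^sub>n\<^sub>h\<close>.\<close>

lemma bij_add_nilpotent:
  fixes K :: "'a::real_vector \<Rightarrow> 'a"
  assumes "linear K" and "\<And>v. K (K v) = 0"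
  shows "bij (\<lambda>v. v + K v)"
proof (rule o_bij[where g = "\<lambda>v. v - K v"])
  interpret K: linear K by fact
  show "(\<lambda>v. v - K v) \<circ> (\<lambda>v. v + K v) = id" and "(\<lambda>v. v + K v) \<circ> (\<lambda>v. v - K v) = id"
    by (auto simp: fun_eq_iff K.add K.diff assms(2))
qed

lemma linear_bv_sharp:
  assumes "\<And>eta. linear (P eta)"
  shows "linear (bv_sharp P)"
proof -
  interpret P: linear "P eta" for eta by fact
  show ?thesis
    by (rule linearI) (simp_all add: bv_sharp_def vec_eq_iff P.add P.scale)
qed

lemma linear_form_flat:
  assumes "\<And>w. linear (\<lambda>v. Xi v w)"
  shows "linear (form_flat Xi)"
proof -
  interpret Xi: linear "\<lambda>v. Xi v w" for w by fact
  show ?thesis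
    by (rule linearI) (simp_all add: form_flat_def vec_eq_iff Xi.add Xi.scale)
qed

lemma form_flat_eq_0:
  assumes "\<And>w. Xi v w = 0"
  shows "form_flat Xi v = 0"
  using assms by (simp add: form_flat_def vec_eq_iff zero_prod_def)

lemma linear_Pi_nh: "linear (Pi_nh X C q p eta)"
  by (rule linearI)
    (simp_all add: Pi_nh_def algebra_simps sum.distrib sum_distrib_left sum_subtractf)

lemma fst_bv_sharp_Pi_nh_horizontal: "fst (bv_sharp (Pi_nh X C q p) (xi, 0)) = 0"
  by (simp add: bv_sharp_def Pi_nh_def vec_eq_iff)

lemma linear_Xi_form:
  fixes p :: "real^'d::finite" and w :: "(real^'q::finite) \<times> (real^'d)"
  shows "linear (\<lambda>v. Xi_form Lam g X mu q p v w)"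
proof (rule linearI)
  define t where "t v a b c = Bup Lam g X q c a b * p $ c *
    ((mu a q \<bullet> fst v) * (mu b q \<bullet> fst w) - (mu b q \<bullet> fst v) * (mu a q \<bullet> fst w))"
    for v :: "(real^'q) \<times> (real^'d)" and a b c
  have Xi_t: "Xi_form Lam g X mu q p v w = (1/2) * (\<Sum>a\<in>UNIV. \<Sum>b\<in>UNIV. \<Sum>c\<in>UNIV. t v a b c)" for v
    by (simp add: Xi_form_def t_def)
  have "t (u + v) a b c = t u a b c + t v a b c" for u v a b c
    by (simp add: t_def inner_add_right algebra_simps)
  then show "Xi_form Lam g X mu q p (u + v) w = Xi_form Lam g X mu q p u w + Xi_form Lam g X mu q p v w" for u v
    by (simp add: Xi_t sum.distrib distrib_left)
  have "t (r *\<^sub>R v) a b c = r * t v a b c" for r v a b c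
    by (simp add: t_def algebra_simps)
  then show "Xi_form Lam g X mu q p (r *\<^sub>R v) w = r *\<^sub>R Xi_form Lam g X mu q p v w" for r v
    by (simp add: Xi_t sum_distrib_left)
qed

lemma Xi_form_vertical_left: "Xi_form Lam g X mu q p (0, y) w = 0"
  by (simp add: Xi_form_def)

lemma snd_form_flat_Xi_form: "snd (form_flat (Xi_form Lam g X mu q p) v) = 0"
  by (simp add: form_flat_def Xi_form_def vec_eq_iff)

theorem lemma3p1:
  fixes U :: "(real^'q::finite) set"
    and X :: "'d::finite + 'c::finite \<Rightarrow> real^'q \<Rightarrow> real^'q"
    and C :: "'d + 'c \<Rightarrow> 'd + 'c \<Rightarrow> 'd + 'c \<Rightarrow> real^'q \<Rightarrow> real"
    and g :: "real^'q \<Rightarrow> real^'q \<Rightarrow> real^'q \<Rightarrow> real"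
    and Wv :: "'c \<Rightarrow> real^'q \<Rightarrow> real^'q"
    and mu :: "'d \<Rightarrow> real^'q \<Rightarrow> real^'q"
    and Lam :: "real^'q \<Rightarrow> real^'q \<Rightarrow> real^'q \<Rightarrow> real^'q \<Rightarrow> real"
  assumes U_open: "open U"
    and dim: "CARD('q) = CARD('d) + CARD('c)"
    and g_smooth: "\<And>u v. smooth_on U (\<lambda>q. g q u v)"
    and g_bilin: "\<And>q. q \<in> U \<Longrightarrow> bilinear (g q)"
    and g_sym: "\<And>q u v. q \<in> U \<Longrightarrow> g q u v = g q v u"
    and g_pos: "\<And>q v. q \<in> U \<Longrightarrow> v \<noteq> 0 \<Longrightarrow> g q v v > 0"
    and X_smooth: "\<And>j. smooth_vf_on U (X j)"
    and X_frame: "\<And>q. q \<in> U \<Longrightarrow> inj (\<lambda>j. X j q) \<and> independent (range (\<lambda>j. X j q))"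
    and X_perp: "\<And>q a A. q \<in> U \<Longrightarrow> g q (X (Inl a) q) (X (Inr A) q) = 0"
    and C_bracket: "\<And>q i j. q \<in> U \<Longrightarrow>
        lie_bracket (X i) (X j) q = (\<Sum>k\<in>UNIV. C k i j q *\<^sub>R X k q)"
    and W_smooth: "\<And>A. smooth_vf_on U (Wv A)"
    and W_compl: "\<And>q. q \<in> U \<Longrightarrow>
        inj (\<lambda>j. case j of Inl a \<Rightarrow> X (Inl a) q | Inr A \<Rightarrow> Wv A q)
        \<and> independent (range (\<lambda>j. case j of Inl a \<Rightarrow> X (Inl a) q | Inr A \<Rightarrow> Wv A q))"
    and mu_smooth: "\<And>a. smooth_vf_on U (mu a)"
    and mu_dual: "\<And>q a b. q \<in> U \<Longrightarrow> mu a q \<bullet> X (Inl b) q = (if a = b then 1 else 0)"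
    and mu_W: "\<And>q a A. q \<in> U \<Longrightarrow> mu a q \<bullet> Wv A q = 0"
    and Lam_smooth: "\<And>u v w. smooth_on U (\<lambda>q. Lam q u v w)"
    and Lam_tri: "\<And>q. q \<in> U \<Longrightarrow> trilinear (Lam q)"
    and Lam_alt: "\<And>q. q \<in> U \<Longrightarrow> alternating3 (Lam q)"
    and Lam_W: "\<And>q A v w. q \<in> U \<Longrightarrow> Lam q (Wv A q) v w = 0"
  shows "\<forall>q\<in>U. \<forall>p :: real^'d.
     linear (\<lambda>v. v + bv_sharp (Pi_nh X C q p) (form_flat (Xi_form Lam g X mu q p) v))
   \<and> bij (\<lambda>v. v + bv_sharp (Pi_nh X C q p) (form_flat (Xi_form Lam g X mu q p) v))"
proof (intro ballI allI)
  fix q p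
  define sharp where "sharp = bv_sharp (Pi_nh X C q p)"
  define flat where "flat = form_flat (Xi_form Lam g X mu q p)"
  have lin_sharp: "linear sharp" and lin_flat: "linear flat"
    unfolding sharp_def flat_def
    by (simp_all add: linear_bv_sharp linear_Pi_nh linear_form_flat linear_Xi_form)
  have lin_K: "linear (sharp \<circ> flat)"
    using lin_sharp lin_flat by (rule linear_compose[rotated])
  have nilpotent: "sharp (flat (sharp (flat v))) = 0" for v
  proof -
    have "flat v = (fst (flat v), 0)"
      by (simp add: flat_def snd_form_flat_Xi_form prod_eq_iff)
    then have "sharp (flat v) = (0, snd (sharp (flat v)))"
      by (metis sharp_def fst_bv_sharp_Pi_nh_horizontal prod.collapse)
    then have "flat (sharp (flat v)) = 0"
      by (metis flat_def form_flat_eq_0 Xi_form_vertical_left)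
    then show ?thesis
      using lin_sharp by (simp add: linear_0)
  qed
  show "linear (\<lambda>v. v + sharp (flat v)) \<and> bij (\<lambda>v. v + sharp (flat v))"
    using linear_compose_add[OF linear_id lin_K] bij_add_nilpotent[OF lin_K] nilpotent
    by (simp add: id_def o_def)
qed

end
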